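(* For every Eulerian poset $P$ of rank $n+1$, the polynomial $(1+q)^{\lceil n/2\rceil}$ divides $\Theta(\Psi(P))$ in $\mathbb{Z}[q]$.
   Context: A graded poset $P$ with minimum $\hat0$ and maximum $\hat1$ is Eulerian if every interval $[x,y]$ with $x<y$ has as many elements of even rank as of odd rank. For $P$ of rank $n+1$ with rank function $\rho$, the $\mathbf{a}\mathbf{b}$-index is $\Psi(P)=\sum_{S\subseteq\{1,\dots,n\}} f_S\, v_S$, where for $S=\{s_1<\cdots<s_k\}$, $f_S$ is the number of chains $\hat0<x_1<\cdots<x_k<\hat1$ with $\rho(x_i)=s_i$, and $v_S=v_1\cdots v_n$ with $v_i=\mathbf{b}$ if $i\in S$, $v_i=\mathbf{a}-\mathbf{b}$ otherwise ($\mathbf{a},\mathbf{b}$ non-commuting variables). The Major MacMahon map $\Theta:\mathbb{Z}\langle\mathbf{a},\mathbf{b}\rangle\to\mathbb{Z}[q]$ is linear with $\Theta(u_1\cdots u_n)=\prod_{i:\,u_i=\mathbf{b}}q^i$ on monomials. *)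

theory Defs
  imports "HOL-Computational_Algebra.Polynomial" Complex_Main
begin

definition lt_on :: "('a \<Rightarrow> 'a \<Rightarrow> bool) \<Rightarrow> 'a \<Rightarrow> 'a \<Rightarrow> bool" where
  "lt_on le x y \<longleftrightarrow> le x y \<and> x \<noteq> y"

definition covers_on :: "'a set \<Rightarrow> ('a \<Rightarrow> 'a \<Rightarrow> bool) \<Rightarrow> 'a \<Rightarrow> 'a \<Rightarrow> bool" where
  "covers_on P le x y \<longleftrightarrow> x \<in> P \<and> y \<in> P \<and> lt_on le x y \<and>
     \<not> (\<exists>z\<in>P. lt_on le x z \<and> lt_on le z y)"

definition graded_poset ::
  "'a set \<Rightarrow> ('a \<Rightarrow> 'a \<Rightarrow> bool) \<Rightarrow> 'a \<Rightarrow> 'a \<Rightarrow> ('a \<Rightarrow> nat) \<Rightarrow> bool" where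
  "graded_poset P le z0 z1 rk \<longleftrightarrow>
     finite P \<and>
     (\<forall>x\<in>P. le x x) \<and>
     (\<forall>x\<in>P. \<forall>y\<in>P. le x y \<and> le y x \<longrightarrow> x = y) \<and>
     (\<forall>x\<in>P. \<forall>y\<in>P. \<forall>z\<in>P. le x y \<and> le y z \<longrightarrow> le x z) \<and>
     z0 \<in> P \<and> z1 \<in> P \<and>
     (\<forall>x\<in>P. le z0 x \<and> le x z1) \<and>
     rk z0 = 0 \<and>
     (\<forall>x y. covers_on P le x y \<longrightarrow> rk y = rk x + 1)"

definition eulerian ::
  "'a set \<Rightarrow> ('a \<Rightarrow> 'a \<Rightarrow> bool) \<Rightarrow> 'a \<Rightarrow> 'a \<Rightarrow> ('a \<Rightarrow> nat) \<Rightarrow> bool" where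
  "eulerian P le z0 z1 rk \<longleftrightarrow>
     graded_poset P le z0 z1 rk \<and>
     (\<forall>x\<in>P. \<forall>y\<in>P. lt_on le x y \<longrightarrow>
        card {z\<in>P. le x z \<and> le z y \<and> even (rk z - rk x)} =
        card {z\<in>P. le x z \<and> le z y \<and> odd (rk z - rk x)})"

text \<open>Flag f-vector: f_S = number of chains z0 < x_1 < ... < x_k < z1 with
  rk x_i = s_i, i.e. chains C of elements strictly between z0 and z1 on which
  rk is a bijection onto S.\<close>

definition flag_f ::
  "'a set \<Rightarrow> ('a \<Rightarrow> 'a \<Rightarrow> bool) \<Rightarrow> 'a \<Rightarrow> 'a \<Rightarrow> ('a \<Rightarrow> nat) \<Rightarrow> nat set \<Rightarrow> nat" where
  "flag_f P le z0 z1 rk S = card {C. C \<subseteq> P - {z0, z1} \<and>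
       (\<forall>x\<in>C. \<forall>y\<in>C. le x y \<or> le y x) \<and> bij_betw rk C S}"

text \<open>An element of Z<a,b> is represented by its coefficient function on words;
  a word is a bool list, False standing for the letter a and True for b.\<close>

type_synonym ncpoly = "bool list \<Rightarrow> int"

definition nc_one :: ncpoly where
  "nc_one = (\<lambda>w. if w = [] then 1 else 0)"

definition nc_a :: ncpoly where
  "nc_a = (\<lambda>w. if w = [False] then 1 else 0)"

definition nc_b :: ncpoly where
  "nc_b = (\<lambda>w. if w = [True] then 1 else 0)"

definition nc_mult :: "ncpoly \<Rightarrow> ncpoly \<Rightarrow> ncpoly" where
  "nc_mult f g = (\<lambda>w. \<Sum>k\<le>length w. f (take k w) * g (drop k w))"

definition v_word :: "nat \<Rightarrow> nat set \<Rightarrow> ncpoly" where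
  "v_word n S = foldr nc_mult
      (map (\<lambda>i. if i \<in> S then nc_b else (\<lambda>w. nc_a w - nc_b w)) [1..<n+1]) nc_one"

definition ab_index ::
  "'a set \<Rightarrow> ('a \<Rightarrow> 'a \<Rightarrow> bool) \<Rightarrow> 'a \<Rightarrow> 'a \<Rightarrow> ('a \<Rightarrow> nat) \<Rightarrow> nat \<Rightarrow> ncpoly" where
  "ab_index P le z0 z1 rk n =
     (\<lambda>w. \<Sum>S\<in>Pow {1..n}. int (flag_f P le z0 z1 rk S) * v_word n S w)"

text \<open>Major MacMahon map: linear, sending u_1...u_m to the product of q^i over
  positions i (1-based) with u_i = b. Defined on finitely supported elements.\<close>

definition Theta :: "ncpoly \<Rightarrow> int poly" where
  "Theta F = (\<Sum>w\<in>{w. F w \<noteq> 0}.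
      smult (F w) (\<Prod>i\<in>{i. i < length w \<and> w ! i}. [:0, 1:] ^ (i + 1)))"

end

theory Submission
  imports Defs
begin

(*
  Weight each chain C of the open interval (u, v) by alpha i at the ranks i it meets and by
  beta i at the other ranks strictly between u and v. For alpha i = q^i and beta i = 1 - q^i the
  chain sum of the whole poset is Theta(Psi(P)). Double the weights and write
  2 q^i = (1 + q^i) - (1 - q^i); splitting off the chain elements that pick the summand 1 + q^i,
  the doubled sum Phi satisfies  Phi(u, v) = E(u, v) + sum_z E(u, z) (1 + q^(rk z)) Phi(z, v),
  where E has the weights -(1 - q^i) and 2 (1 - q^i). Thus E(u, v) is the product of the
  1 - q^i times the ab-index of [u, v] at a = 1, b = -1, which the Eulerian relations force to
  vanish when rk v - rk u is even. Otherwise the factors 1 - q^i at even i supply one factor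
  1 + q per odd rank strictly between u and v, as does 1 + q^i at odd i. By induction
  (1 + q)^ceil(n/2) divides 2^n Theta(Psi(P)), and 1 + q is coprime to 2.
*)

definition rank_weight :: "(nat \<Rightarrow> 'r::comm_monoid_mult) \<Rightarrow> (nat \<Rightarrow> 'r) \<Rightarrow> nat \<Rightarrow> nat \<Rightarrow> nat set \<Rightarrow> 'r"
  where "rank_weight \<alpha> \<beta> a b S = (\<Prod>i\<in>{a<..<b}. if i \<in> S then \<alpha> i else \<beta> i)"

lemma rank_weight_split:
  assumes "a < c" "c < b"
  shows "rank_weight \<alpha> \<beta> a b S = rank_weight \<alpha> \<beta> a c S * (if c \<in> S then \<alpha> c else \<beta> c) * rank_weight \<alpha> \<beta> c b S"
proof -
  have "{a<..<b} = {a<..<c} \<union> ({c} \<union> {c<..<b})"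
    using assms by auto
  then show ?thesis
    unfolding rank_weight_def by (simp add: prod.union_disjoint ac_simps)
qed

lemma rank_weight_cong:
  "S \<inter> {a<..<b} = T \<inter> {a<..<b} \<Longrightarrow> rank_weight \<alpha> \<beta> a b S = rank_weight \<alpha> \<beta> a b T"
  unfolding rank_weight_def by (intro prod.cong refl) (metis Int_iff)

lemma rank_weight_empty: "rank_weight \<alpha> \<beta> a b {} = (\<Prod>i\<in>{a<..<b}. \<beta> i)"
  by (simp add: rank_weight_def)

lemma rank_weight_insert_left:
  assumes "a < c" "c < b" "S \<subseteq> {c<..<b}"
  shows "rank_weight \<alpha> \<beta> a b (insert c S) = (\<Prod>i\<in>{a<..<c}. \<beta> i) * \<alpha> c * rank_weight \<alpha> \<beta> c b S"
proof -
  have "rank_weight \<alpha> \<beta> a c (insert c S) = rank_weight \<alpha> \<beta> a c {}"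
    and "rank_weight \<alpha> \<beta> c b (insert c S) = rank_weight \<alpha> \<beta> c b S"
    using assms by (auto intro!: rank_weight_cong)
  then show ?thesis
    using rank_weight_split[OF assms(1,2), of \<alpha> \<beta> "insert c S"] by (simp add: rank_weight_empty)
qed

lemma rank_weight_insert_right:
  assumes "a < c" "c < b" "S \<subseteq> {a<..<c}"
  shows "rank_weight \<alpha> \<beta> a b (insert c S) = rank_weight \<alpha> \<beta> a c S * \<alpha> c * (\<Prod>i\<in>{c<..<b}. \<beta> i)"
proof -
  have "rank_weight \<alpha> \<beta> c b (insert c S) = rank_weight \<alpha> \<beta> c b {}"
    and "rank_weight \<alpha> \<beta> a c (insert c S) = rank_weight \<alpha> \<beta> a c S"
    using assms by (auto intro!: rank_weight_cong)
  then show ?thesis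
    using rank_weight_split[OF assms(1,2), of \<alpha> \<beta> "insert c S"] by (simp add: rank_weight_empty)
qed

lemma rank_weight_scale:
  "rank_weight (\<lambda>i. f i * \<alpha> i) (\<lambda>i. f i * \<beta> i) a b S = (\<Prod>i\<in>{a<..<b}. f i) * rank_weight \<alpha> \<beta> a b S"
  unfolding rank_weight_def by (simp add: prod.distrib[symmetric] if_distrib)

lemma linear_factor_power_dvd_cancel:
  fixes p f :: "'a::idom poly"
  assumes "poly p a \<noteq> 0" and "[:-a, 1:] ^ k dvd p * f"
  shows "[:-a, 1:] ^ k dvd f"
proof (cases "f = 0")
  case False
  moreover have "p \<noteq> 0"
    using assms(1) by auto
  ultimately have "order a (p * f) = order a f"
    using order_mult[of p f a] order_0I[OF assms(1)] by simp
  then show ?thesis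
    using assms(2) \<open>p \<noteq> 0\<close> False by (simp add: order_divides)
qed simp

lemma one_plus_X_dvd_one_minus_X_power:
  "even i \<Longrightarrow> [:1, 1:] dvd (1 - [:0, 1:] ^ i :: 'a::comm_ring_1 poly)"
  using poly_eq_0_iff_dvd[of "1 - [:0, 1:] ^ i" "-1"] by (simp add: poly_power)

lemma one_plus_X_dvd_one_plus_X_power:
  "odd i \<Longrightarrow> [:1, 1:] dvd (1 + [:0, 1:] ^ i :: 'a::comm_ring_1 poly)"
  using poly_eq_0_iff_dvd[of "1 + [:0, 1:] ^ i" "-1"] by (simp add: poly_power)

lemma one_plus_X_power_dvd_prod_one_minus_X_power:
  assumes "finite A"
  shows "[:1, 1:] ^ card {i \<in> A. even i} dvd (\<Prod>i\<in>A. 1 - [:0, 1:] ^ i :: 'a::comm_ring_1 poly)"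
proof -
  have "[:1, 1:] ^ card {i \<in> A. even i} = (\<Prod>i\<in>{i \<in> A. even i}. [:1, 1:] :: 'a poly)"
    by simp
  also have "\<dots> dvd (\<Prod>i\<in>{i \<in> A. even i}. 1 - [:0, 1:] ^ i)"
    by (rule prod_dvd_prod) (simp add: one_plus_X_dvd_one_minus_X_power)
  also have "\<dots> dvd (\<Prod>i\<in>A. 1 - [:0, 1:] ^ i)"
    using assms by (rule prod_dvd_prod_subset) blast
  finally show ?thesis .
qed

lemma card_odd_between_eq_sum: "card {i \<in> {a<..<b}. odd i} = (\<Sum>i\<in>{a<..<b::nat}. of_bool (odd i))"
  by (simp add: Int_def conj_commute)

lemma card_odd_between_split:
  fixes a b c :: nat
  assumes "a < c" "c < b"
  shows "card {i \<in> {a<..<b}. odd i}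
    = card {i \<in> {a<..<c}. odd i} + of_bool (odd c) + card {i \<in> {c<..<b}. odd i}"
proof -
  have "{a<..<b} = {a<..<c} \<union> ({c} \<union> {c<..<b})"
    using assms by auto
  then show ?thesis
    unfolding card_odd_between_eq_sum by (simp add: sum.union_disjoint del: sum_of_bool_eq)
qed

lemma card_odd_below: "card {i \<in> {0<..<Suc n}. odd i} = (n + 1) div 2"
proof (induction n)
  case 0
  have "{0<..<Suc 0} = ({} :: nat set)"
    by auto
  then show ?case
    by simp
next
  case (Suc n)
  have "{0<..<Suc (Suc n)} = insert (Suc n) {0<..<Suc n}"
    by auto
  then show ?case
    using Suc unfolding card_odd_between_eq_sum by (simp del: sum_of_bool_eq)
qed

lemma nat_ceiling_half: "nat \<lceil>real n / 2\<rceil> = (n + 1) div 2"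
proof -
  have "\<lceil>real n / 2\<rceil> = - (- int n div 2)"
    using ceiling_divide_eq_div[of "int n" 2] by simp
  then show ?thesis
    by simp
qed

text \<open>Reflection \<open>i \<mapsto> a + b - i\<close> of the interval swaps parities when \<open>a + b\<close> is odd.\<close>

lemma card_even_eq_card_odd_between:
  fixes a b :: nat
  assumes "odd (b - a)"
  shows "card {i \<in> {a<..<b}. even i} = card {i \<in> {a<..<b}. odd i}"
proof (rule bij_betw_same_card[of "\<lambda>i. a + b - i"], rule bij_betw_byWitness[where f' = "\<lambda>i. a + b - i"])
  show "\<forall>i\<in>{i \<in> {a<..<b}. even i}. a + b - (a + b - i) = i"
    "\<forall>i\<in>{i \<in> {a<..<b}. odd i}. a + b - (a + b - i) = i"
    by auto
  show "(\<lambda>i. a + b - i) ` {i \<in> {a<..<b}. even i} \<subseteq> {i \<in> {a<..<b}. odd i}"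
    "(\<lambda>i. a + b - i) ` {i \<in> {a<..<b}. odd i} \<subseteq> {i \<in> {a<..<b}. even i}"
    using assms by (auto; presburger)+
qed

lemma nc_mult_Cons_letter:
  assumes "\<And>w. length w \<noteq> 1 \<Longrightarrow> f w = 0"
  shows "nc_mult f g (x # w) = f [x] * g w"
proof -
  have "nc_mult f g (x # w) = f (take 1 (x # w)) * g (drop 1 (x # w))
      + (\<Sum>k\<in>{..length (x # w)} - {1}. f (take k (x # w)) * g (drop k (x # w)))"
    unfolding nc_mult_def by (rule sum.remove) auto
  also have "(\<Sum>k\<in>{..length (x # w)} - {1}. f (take k (x # w)) * g (drop k (x # w))) = 0"
    using assms by (intro sum.neutral) (auto simp: min_def)
  finally show ?thesis
    by simp
qed

lemma foldr_nc_mult_letters: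
  assumes "\<forall>f\<in>set fs. \<forall>w. length w \<noteq> 1 \<longrightarrow> f w = 0"
  shows "foldr nc_mult fs nc_one w = (if length w = length fs then \<Prod>j<length fs. (fs ! j) [w ! j] else 0)"
  using assms
proof (induction fs arbitrary: w)
  case Nil
  then show ?case
    by (simp add: nc_one_def)
next
  case (Cons f fs)
  show ?case
  proof (cases w)
    case Nil
    then show ?thesis
      using Cons.prems by (simp add: nc_mult_def)
  next
    case (Cons x w')
    then show ?thesis
      using Cons.prems Cons.IH[of w'] nc_mult_Cons_letter[of f]
      by (simp add: prod.lessThan_Suc_shift del: prod.lessThan_Suc)
  qed
qed

lemma v_word_eq:
  "v_word n S w = (if length w = n then \<Prod>j<n.
     if w ! j then (if Suc j \<in> S then 1 else -1) else (if Suc j \<in> S then 0 else 1) else 0)"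
proof -
  define L where "L i = (if i \<in> S then nc_b else (\<lambda>w. nc_a w - nc_b w))" for i
  have letters: "\<forall>f\<in>set (map L [1..<n+1]). \<forall>w. length w \<noteq> 1 \<longrightarrow> f w = 0"
    by (auto simp: L_def nc_a_def nc_b_def)
  have "(\<Prod>j<n. (map L [1..<n+1] ! j) [w ! j]) = (\<Prod>j<n. L (Suc j) [w ! j])"
    by (intro prod.cong refl) (simp del: upt_Suc)
  then have "v_word n S w = (if length w = n then \<Prod>j<n. L (Suc j) [w ! j] else 0)"
    unfolding v_word_def L_def[symmetric] foldr_nc_mult_letters[OF letters] by (simp del: upt_Suc)
  moreover have "L i [x] = (if x then (if i \<in> S then 1 else -1) else (if i \<in> S then 0 else 1))" for i x
    by (simp add: L_def nc_a_def nc_b_def)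
  ultimately show ?thesis
    by simp
qed

lemma sum_words_prod:
  fixes h :: "nat \<Rightarrow> bool \<Rightarrow> 'a::comm_semiring_1"
  shows "(\<Sum>w | length w = n. \<Prod>j<n. h j (w ! j)) = (\<Prod>j<n. h j False + h j True)"
proof (induction n arbitrary: h)
  case 0
  have "{w :: bool list. length w = 0} = {[]}"
    by auto
  then show ?case
    by simp
next
  case (Suc n)
  have words: "{w. length w = Suc n} = (\<lambda>(w, x). x # w) ` ({w. length w = n} \<times> UNIV)"
    by (auto simp: length_Suc_conv)
  have "(\<Sum>w | length w = Suc n. \<Prod>j<Suc n. h j (w ! j))
      = (\<Sum>(w, x) \<in> {w. length w = n} \<times> UNIV. h 0 x * (\<Prod>j<n. h (Suc j) (w ! j)))"
    unfolding words sum.reindex[OF inj_split_Cons]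
    by (simp add: comp_def split_def prod.lessThan_Suc_shift del: prod.lessThan_Suc)
  also have "\<dots> = (h 0 False + h 0 True) * (\<Sum>w | length w = n. \<Prod>j<n. h (Suc j) (w ! j))"
    by (simp add: sum.cartesian_product[symmetric] UNIV_bool sum.distrib sum_distrib_left algebra_simps)
  finally show ?case
    by (simp add: Suc.IH[of "\<lambda>j. h (Suc j)"] prod.lessThan_Suc_shift del: prod.lessThan_Suc)
qed

lemma Theta_eq_sum_words:
  assumes "\<And>w. F w \<noteq> 0 \<Longrightarrow> length w = n"
  shows "Theta F = (\<Sum>w | length w = n. of_int (F w) * (\<Prod>j<n. if w ! j then [:0, 1:] ^ Suc j else 1))"
proof -
  have fin: "finite {w :: bool list. length w = n}"
    by (rule finite_list_length)
  have "Theta F = (\<Sum>w | length w = n. smult (F w) (\<Prod>i\<in>{i. i < length w \<and> w ! i}. [:0, 1:] ^ (i + 1)))"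
    unfolding Theta_def by (rule sum.mono_neutral_left[OF fin]) (use assms in auto)
  also have "\<dots> = (\<Sum>w | length w = n. of_int (F w) * (\<Prod>j<n. if w ! j then [:0, 1:] ^ Suc j else 1))"
  proof (rule sum.cong[OF refl])
    fix w :: "bool list" assume "w \<in> {w. length w = n}"
    then have "{i. i < length w \<and> w ! i} = {j \<in> {..<n}. w ! j}"
      by auto
    then have monomial: "(\<Prod>i\<in>{i. i < length w \<and> w ! i}. [:0, 1:] ^ (i + 1))
        = (\<Prod>j<n. if w ! j then [:0, 1:] ^ Suc j else 1)"
      by (simp only: prod.inter_filter[OF finite_lessThan] Suc_eq_plus1)
    show "smult (F w) (\<Prod>i\<in>{i. i < length w \<and> w ! i}. [:0, 1:] ^ (i + 1))
        = of_int (F w) * (\<Prod>j<n. if w ! j then [:0, 1:] ^ Suc j else 1)"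
      unfolding monomial by (simp add: of_int_poly)
  qed
  finally show ?thesis .
qed

lemma Theta_v_word_sum:
  "(\<Sum>w | length w = n. of_int (v_word n S w) * (\<Prod>j<n. if w ! j then [:0, 1:] ^ Suc j else 1))
    = rank_weight (\<lambda>i. [:0, 1:] ^ i :: int poly) (\<lambda>i. 1 - [:0, 1:] ^ i) 0 (Suc n) S"
proof -
  define h :: "nat \<Rightarrow> bool \<Rightarrow> int poly" where
    "h j x = of_int (if x then (if Suc j \<in> S then 1 else -1) else (if Suc j \<in> S then 0 else 1))
      * (if x then [:0, 1:] ^ Suc j else 1)" for j x
  have "(\<Sum>w | length w = n. of_int (v_word n S w) * (\<Prod>j<n. if w ! j then [:0, 1:] ^ Suc j else 1))
      = (\<Sum>w | length w = n. \<Prod>j<n. h j (w ! j))"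
    by (intro sum.cong refl) (simp add: v_word_eq h_def prod.distrib)
  also have "\<dots> = (\<Prod>j<n. if Suc j \<in> S then [:0, 1:] ^ Suc j else 1 - [:0, 1:] ^ Suc j)"
    unfolding sum_words_prod by (intro prod.cong refl) (simp add: h_def)
  also have "\<dots> = rank_weight (\<lambda>i. [:0, 1:] ^ i) (\<lambda>i. 1 - [:0, 1:] ^ i) 0 (Suc n) S"
  proof -
    have "{0<..<Suc n} = Suc ` {..<n}"
      by (auto simp: image_iff gr0_conv_Suc)
    then show ?thesis
      unfolding rank_weight_def by (simp add: prod.reindex)
  qed
  finally show ?thesis .
qed

lemma Theta_ab_index:
  "Theta (ab_index P le z0 z1 rk n) = (\<Sum>S\<in>Pow {1..n}.
     of_nat (flag_f P le z0 z1 rk S) * rank_weight (\<lambda>i. [:0, 1:] ^ i) (\<lambda>i. 1 - [:0, 1:] ^ i) 0 (Suc n) S)"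
proof -
  have "Theta (ab_index P le z0 z1 rk n) = (\<Sum>w | length w = n.
      of_int (ab_index P le z0 z1 rk n w) * (\<Prod>j<n. if w ! j then [:0, 1:] ^ Suc j else 1))"
    by (rule Theta_eq_sum_words, rule ccontr) (simp add: ab_index_def v_word_eq)
  also have "\<dots> = (\<Sum>S\<in>Pow {1..n}. of_nat (flag_f P le z0 z1 rk S) * (\<Sum>w | length w = n.
      of_int (v_word n S w) * (\<Prod>j<n. if w ! j then [:0, 1:] ^ Suc j else 1)))"
    unfolding ab_index_def by (simp add: sum_distrib_left sum_distrib_right mult.assoc) (rule sum.swap)
  finally show ?thesis
    by (simp only: Theta_v_word_sum)
qed

locale ranked_poset =
  fixes P :: "'a set" and le :: "'a \<Rightarrow> 'a \<Rightarrow> bool" and rk :: "'a \<Rightarrow> nat"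
  assumes finite_P: "finite P"
    and refl_le: "x \<in> P \<Longrightarrow> le x x"
    and antisym_le: "\<lbrakk>x \<in> P; y \<in> P; le x y; le y x\<rbrakk> \<Longrightarrow> x = y"
    and trans_le: "\<lbrakk>x \<in> P; y \<in> P; z \<in> P; le x y; le y z\<rbrakk> \<Longrightarrow> le x z"
    and rk_strict_mono: "\<lbrakk>x \<in> P; y \<in> P; lt_on le x y\<rbrakk> \<Longrightarrow> rk x < rk y"
begin

lemma lt_trans: "\<lbrakk>x \<in> P; y \<in> P; z \<in> P; lt_on le x y; lt_on le y z\<rbrakk> \<Longrightarrow> lt_on le x z"
  unfolding lt_on_def using trans_le antisym_le by blast

definition open_interval :: "'a \<Rightarrow> 'a \<Rightarrow> 'a set"
  where "open_interval u v = {z \<in> P. lt_on le u z \<and> lt_on le z v}"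

definition chains_between :: "'a \<Rightarrow> 'a \<Rightarrow> 'a set set"
  where "chains_between u v = {D. D \<subseteq> open_interval u v \<and> (\<forall>x\<in>D. \<forall>y\<in>D. le x y \<or> le y x)}"

lemma open_interval_subset: "open_interval u v \<subseteq> P"
  unfolding open_interval_def by blast

lemma finite_open_interval: "finite (open_interval u v)"
  using finite_P open_interval_subset by (rule finite_subset[rotated])

lemma finite_chains_between: "finite (chains_between u v)"
proof -
  have "chains_between u v \<subseteq> Pow (open_interval u v)"
    unfolding chains_between_def by blast
  then show ?thesis
    using finite_open_interval by (meson finite_Pow_iff finite_subset)
qed

lemma rk_open_interval:
  "\<lbrakk>z \<in> open_interval u v; u \<in> P; v \<in> P\<rbrakk> \<Longrightarrow> rk u < rk z \<and> rk z < rk v"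
  unfolding open_interval_def using rk_strict_mono by blast

lemma open_interval_left:
  "\<lbrakk>u \<in> P; v \<in> P; w \<in> open_interval u v\<rbrakk> \<Longrightarrow> open_interval u w = {z \<in> open_interval u v. lt_on le z w}"
  unfolding open_interval_def using lt_trans by blast

lemma open_interval_right:
  "\<lbrakk>u \<in> P; v \<in> P; w \<in> open_interval u v\<rbrakk> \<Longrightarrow> open_interval w v = {z \<in> open_interval u v. lt_on le w z}"
  unfolding open_interval_def using lt_trans by blast

lemma chain_min_split:
  assumes "D \<in> chains_between u v" "D \<noteq> {}"
  obtains z where "z \<in> D" "D - {z} \<in> chains_between z v"
proof -
  have "finite D"
    using assms(1) finite_open_interval unfolding chains_between_def by (blast intro: finite_subset)
  have "Min (rk ` D) \<in> rk ` D"
    using \<open>finite D\<close> assms(2) by simp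
  then obtain z where "z \<in> D" "rk z = Min (rk ` D)"
    by (metis imageE)
  with \<open>finite D\<close> have z: "z \<in> D" "\<forall>y\<in>D. rk z \<le> rk y"
    by simp_all
  have DP: "D \<subseteq> P"
    using assms(1) open_interval_subset unfolding chains_between_def by blast
  have "lt_on le z y" if y: "y \<in> D - {z}" for y
  proof -
    have "le z y \<or> le y z"
      using assms(1) z(1) y unfolding chains_between_def by blast
    moreover have "\<not> lt_on le y z"
      using rk_strict_mono[of y z] z y DP by force
    ultimately show ?thesis
      using y unfolding lt_on_def by blast
  qed
  then have "D - {z} \<in> chains_between z v"
    using assms(1) unfolding chains_between_def open_interval_def by blast
  with z show thesis using that by blast
qed

lemma lt_on_chains_between: "\<lbrakk>D \<in> chains_between z v; y \<in> D\<rbrakk> \<Longrightarrow> lt_on le z y"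
  unfolding chains_between_def open_interval_def by blast

lemma inj_on_insert_chains_between:
  "inj_on (\<lambda>(z, D). insert z D) (SIGMA z:open_interval u v. chains_between z v)"
proof (rule inj_onI, clarsimp)
  fix z D z' D'
  assume z: "z \<in> open_interval u v" "D \<in> chains_between z v"
    and z': "z' \<in> open_interval u v" "D' \<in> chains_between z' v"
    and eq: "insert z D = insert z' D'"
  have "z = z'"
  proof (rule ccontr)
    assume "z \<noteq> z'"
    then have "z' \<in> D" "z \<in> D'"
      using eq by (metis insertCI insertE)+
    then have "lt_on le z z'" "lt_on le z' z"
      using lt_on_chains_between z(2) z'(2) by blast+
    then show False
      using z z' open_interval_subset antisym_le unfolding lt_on_def by blast
  qed
  moreover have "z \<notin> D" "z' \<notin> D'"
    using lt_on_chains_between[OF z(2)] lt_on_chains_between[OF z'(2)] unfolding lt_on_def by blast+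
  ultimately show "z = z' \<and> D = D'"
    using eq by (metis insert_ident)
qed

lemma insert_chains_between_image:
  assumes u: "u \<in> P"
  shows "(\<lambda>(z, D). insert z D) ` (SIGMA z:open_interval u v. chains_between z v) = chains_between u v - {{}}"
proof (intro equalityI subsetI)
  fix C assume "C \<in> (\<lambda>(z, D). insert z D) ` (SIGMA z:open_interval u v. chains_between z v)"
  then obtain z D where z: "z \<in> open_interval u v" "D \<in> chains_between z v" and C: "C = insert z D"
    by blast
  have "D \<subseteq> open_interval u v"
    using z u open_interval_subset lt_trans unfolding chains_between_def open_interval_def by blast
  then show "C \<in> chains_between u v - {{}}"
    using z lt_on_chains_between[OF z(2)] refl_le open_interval_subset
    unfolding C chains_between_def lt_on_def by blast
next
  fix C assume C: "C \<in> chains_between u v - {{}}"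
  then obtain z where "z \<in> C" "C - {z} \<in> chains_between z v"
    by (auto elim: chain_min_split)
  moreover have "z \<in> open_interval u v"
    using \<open>z \<in> C\<close> C unfolding chains_between_def by blast
  ultimately show "C \<in> (\<lambda>(z, D). insert z D) ` (SIGMA z:open_interval u v. chains_between z v)"
    by (intro image_eqI[of _ _ "(z, C - {z})"]) auto
qed

lemma sum_chains_between_first:
  assumes "u \<in> P"
  shows "(\<Sum>D\<in>chains_between u v. F D)
    = F {} + (\<Sum>z\<in>open_interval u v. \<Sum>D\<in>chains_between z v. F (insert z D))"
proof -
  have "(\<Sum>p\<in>(SIGMA z:open_interval u v. chains_between z v). F (case p of (z, D) \<Rightarrow> insert z D))
      = (\<Sum>D\<in>chains_between u v - {{}}. F D)"
    using inj_on_insert_chains_between insert_chains_between_image[OF assms]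
    by (intro sum.reindex_bij_betw bij_betw_imageI)
  moreover have "(\<Sum>D\<in>chains_between u v. F D) = F {} + (\<Sum>D\<in>chains_between u v - {{}}. F D)"
    using finite_chains_between by (rule sum.remove) (simp add: chains_between_def)
  ultimately show ?thesis
    by (simp add: sum.Sigma finite_open_interval finite_chains_between split_def)
qed

lemma dual_ranked_poset: "ranked_poset P (\<lambda>x y. le y x) (\<lambda>x. Max (rk ` P) - rk x)"
proof
  fix x y assume "x \<in> P" "y \<in> P" "lt_on (\<lambda>x y. le y x) x y"
  then have "rk y < rk x" "rk x \<le> Max (rk ` P)"
    using rk_strict_mono finite_P unfolding lt_on_def by auto
  then show "Max (rk ` P) - rk x < Max (rk ` P) - rk y" by linarith
qed (use finite_P refl_le antisym_le trans_le in blast)+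

lemma dual_open_interval: "ranked_poset.open_interval P (\<lambda>x y. le y x) u v = open_interval v u"
  unfolding ranked_poset.open_interval_def[OF dual_ranked_poset] open_interval_def lt_on_def by blast

lemma dual_chains_between: "ranked_poset.chains_between P (\<lambda>x y. le y x) u v = chains_between v u"
  unfolding ranked_poset.chains_between_def[OF dual_ranked_poset] chains_between_def dual_open_interval
  by blast

lemma sum_chains_between_last:
  assumes "v \<in> P"
  shows "(\<Sum>D\<in>chains_between u v. F D)
    = F {} + (\<Sum>z\<in>open_interval u v. \<Sum>D\<in>chains_between u z. F (insert z D))"
  using ranked_poset.sum_chains_between_first[OF dual_ranked_poset assms]
  unfolding dual_open_interval dual_chains_between .

definition conv :: "('a \<Rightarrow> 'r::comm_semiring_1) \<Rightarrow> ('a \<Rightarrow> 'a \<Rightarrow> 'r) \<Rightarrow> ('a \<Rightarrow> 'a \<Rightarrow> 'r) \<Rightarrow> 'a \<Rightarrow> 'a \<Rightarrow> 'r"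
  where "conv m A B u v = (\<Sum>z\<in>open_interval u v. A u z * m z * B z v)"

lemma conv_cong:
  assumes "\<And>z. z \<in> open_interval u v \<Longrightarrow> A u z = A' u z" "\<And>z. z \<in> open_interval u v \<Longrightarrow> B z v = B' z v"
  shows "conv m A B u v = conv m A' B' u v"
  unfolding conv_def using assms by (intro sum.cong) auto

lemma conv_assoc:
  assumes u: "u \<in> P" and v: "v \<in> P"
  shows "conv n (conv m A B) C u v = conv m A (conv n B C) u v"
proof -
  have "conv n (conv m A B) C u v
      = (\<Sum>w\<in>open_interval u v. \<Sum>z\<in>{z \<in> open_interval u v. lt_on le z w}. A u z * m z * B z w * n w * C w v)"
    unfolding conv_def sum_distrib_right
    by (rule sum.cong[OF refl]) (simp add: open_interval_left[OF u v] mult.assoc)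
  also have "\<dots> = (\<Sum>z\<in>open_interval u v. \<Sum>w\<in>{w \<in> open_interval u v. lt_on le z w}. A u z * m z * B z w * n w * C w v)"
    by (rule sum.swap_restrict) (simp_all add: finite_open_interval)
  also have "\<dots> = conv m A (conv n B C) u v"
    unfolding conv_def sum_distrib_left
    by (rule sum.cong[OF refl]) (simp add: open_interval_right[OF u v] mult.assoc)
  finally show ?thesis .
qed

lemma conv_add_weight: "conv (\<lambda>z. m z + m' z) A B u v = conv m A B u v + conv m' A B u v"
  unfolding conv_def by (simp add: sum.distrib algebra_simps)

lemma conv_add_right: "conv m A (\<lambda>x y. B x y + B' x y) u v = conv m A B u v + conv m A B' u v"
  unfolding conv_def by (simp add: sum.distrib algebra_simps)

lemma conv_diff_left:
  "conv m (\<lambda>x y. A x y - A' x y) B u v = conv m A B u v - (conv m A' B u v :: 'r::comm_ring_1)"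
  unfolding conv_def by (simp add: sum_subtractf algebra_simps)

lemma conv_solution_unique:
  assumes Y: "\<And>u v. \<lbrakk>u \<in> P; v \<in> P\<rbrakk> \<Longrightarrow> Y u v = F u v + conv m A Y u v"
    and Y': "\<And>u v. \<lbrakk>u \<in> P; v \<in> P\<rbrakk> \<Longrightarrow> Y' u v = F u v + conv m A Y' u v"
  shows "\<lbrakk>u \<in> P; v \<in> P\<rbrakk> \<Longrightarrow> Y u v = Y' u v"
proof (induction "rk v - rk u" arbitrary: u rule: less_induct)
  case less
  have "conv m A Y u v = conv m A Y' u v"
  proof (rule conv_cong)
    fix z assume z: "z \<in> open_interval u v"
    then have "rk v - rk z < rk v - rk u" "z \<in> P"
      using rk_open_interval[OF z less.prems] open_interval_subset by auto
    then show "Y z v = Y' z v" using less by blast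
  qed simp
  then show ?case using Y[OF less.prems] Y'[OF less.prems] by simp
qed

lemma conv_solution_split:
  fixes Y E B :: "'a \<Rightarrow> 'a \<Rightarrow> 'r::comm_ring_1"
  assumes Y: "\<And>u v. \<lbrakk>u \<in> P; v \<in> P\<rbrakk> \<Longrightarrow> Y u v = B u v + conv m B Y u v"
    and E: "\<And>u v. \<lbrakk>u \<in> P; v \<in> P\<rbrakk> \<Longrightarrow> E u v = B u v + conv m' B E u v"
  shows "\<lbrakk>u \<in> P; v \<in> P\<rbrakk> \<Longrightarrow> Y u v = E u v + conv (\<lambda>z. m z - m' z) E Y u v"
proof (rule conv_solution_unique)
  define F where "F u v = B u v + conv (\<lambda>z. m z - m' z) B Y u v" for u v
  show "Y u v = F u v + conv m' B Y u v" if "u \<in> P" "v \<in> P" for u v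
    using Y[OF that] conv_add_weight[of "\<lambda>z. m z - m' z" m'] unfolding F_def by (simp add: algebra_simps)
  show "E u v + conv (\<lambda>z. m z - m' z) E Y u v
      = F u v + conv m' B (\<lambda>x y. E x y + conv (\<lambda>z. m z - m' z) E Y x y) u v"
    if u: "u \<in> P" and v: "v \<in> P" for u v
  proof -
    have "conv m' B (conv (\<lambda>z. m z - m' z) E Y) u v = conv (\<lambda>z. m z - m' z) (conv m' B E) Y u v"
      by (rule conv_assoc[OF u v, symmetric])
    also have "\<dots> = conv (\<lambda>z. m z - m' z) (\<lambda>x y. E x y - B x y) Y u v"
      using E[OF u] open_interval_subset by (intro conv_cong) (simp_all add: subset_iff)
    finally show ?thesis
      using E[OF u v] unfolding F_def conv_add_right conv_diff_left by simp
  qed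
qed

definition chain_sum :: "(nat \<Rightarrow> 'r::comm_semiring_1) \<Rightarrow> (nat \<Rightarrow> 'r) \<Rightarrow> 'a \<Rightarrow> 'a \<Rightarrow> 'r"
  where "chain_sum \<alpha> \<beta> u v = (\<Sum>D\<in>chains_between u v. rank_weight \<alpha> \<beta> (rk u) (rk v) (rk ` D))"

lemma rk_chains_between:
  "\<lbrakk>D \<in> chains_between u v; u \<in> P; v \<in> P\<rbrakk> \<Longrightarrow> rk ` D \<subseteq> {rk u<..<rk v}"
  unfolding chains_between_def using rk_open_interval by fastforce

lemma chain_sum_first:
  assumes u: "u \<in> P" and v: "v \<in> P"
  shows "chain_sum \<alpha> \<beta> u v = (\<Prod>i\<in>{rk u<..<rk v}. \<beta> i)
    + conv (\<lambda>z. \<alpha> (rk z)) (\<lambda>x y. \<Prod>i\<in>{rk x<..<rk y}. \<beta> i) (chain_sum \<alpha> \<beta>) u v"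
proof -
  have "rank_weight \<alpha> \<beta> (rk u) (rk v) (rk ` insert z D)
      = (\<Prod>i\<in>{rk u<..<rk z}. \<beta> i) * \<alpha> (rk z) * rank_weight \<alpha> \<beta> (rk z) (rk v) (rk ` D)"
    if "z \<in> open_interval u v" "D \<in> chains_between z v" for z D
    using that rk_open_interval[OF that(1) u v] rk_chains_between[OF that(2)] v open_interval_subset
    by (auto intro!: rank_weight_insert_left)
  then show ?thesis
    unfolding chain_sum_def conv_def sum_chains_between_first[OF u]
    by (simp add: rank_weight_empty sum_distrib_left)
qed

lemma chain_sum_last:
  assumes u: "u \<in> P" and v: "v \<in> P"
  shows "chain_sum \<alpha> \<beta> u v = (\<Prod>i\<in>{rk u<..<rk v}. \<beta> i)
    + conv (\<lambda>z. \<alpha> (rk z)) (chain_sum \<alpha> \<beta>) (\<lambda>x y. \<Prod>i\<in>{rk x<..<rk y}. \<beta> i) u v"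
proof -
  have "rank_weight \<alpha> \<beta> (rk u) (rk v) (rk ` insert z D)
      = rank_weight \<alpha> \<beta> (rk u) (rk z) (rk ` D) * \<alpha> (rk z) * (\<Prod>i\<in>{rk z<..<rk v}. \<beta> i)"
    if "z \<in> open_interval u v" "D \<in> chains_between u z" for z D
    using that rk_open_interval[OF that(1) u v] rk_chains_between[OF that(2)] u open_interval_subset
    by (auto intro!: rank_weight_insert_right)
  then show ?thesis
    unfolding chain_sum_def conv_def sum_chains_between_last[OF v]
    by (simp add: rank_weight_empty sum_distrib_right)
qed

lemma chain_sum_scale:
  "chain_sum (\<lambda>i. f i * \<alpha> i) (\<lambda>i. f i * \<beta> i) u v = (\<Prod>i\<in>{rk u<..<rk v}. f i) * chain_sum \<alpha> \<beta> u v"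
  unfolding chain_sum_def rank_weight_scale by (simp add: sum_distrib_left)

lemma chain_sum_of_int:
  "chain_sum (\<lambda>i. of_int (\<alpha> i)) (\<lambda>i. of_int (\<beta> i)) u v = (of_int (chain_sum \<alpha> \<beta> u v) :: 'r::comm_ring_1)"
  unfolding chain_sum_def rank_weight_def by (simp add: of_int_sum of_int_prod if_distrib[of of_int])

lemma inj_on_rk_chain:
  assumes "C \<subseteq> P" "\<forall>x\<in>C. \<forall>y\<in>C. le x y \<or> le y x"
  shows "inj_on rk C"
proof (rule inj_onI, rule ccontr)
  fix x y assume xy: "x \<in> C" "y \<in> C" "rk x = rk y" "x \<noteq> y"
  then have "lt_on le x y \<or> lt_on le y x"
    using assms(2) unfolding lt_on_def by blast
  then show False
    using rk_strict_mono assms(1) xy by fastforce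
qed

lemma sum_flag_f_eq_chain_sum:
  assumes z0: "z0 \<in> P" and z1: "z1 \<in> P" and bounds: "\<forall>x\<in>P. le z0 x \<and> le x z1"
    and rk_z0: "rk z0 = 0" and rk_z1: "rk z1 = Suc n"
  shows "(\<Sum>S\<in>Pow {1..n}. of_nat (flag_f P le z0 z1 rk S) * rank_weight \<alpha> \<beta> 0 (Suc n) S) = chain_sum \<alpha> \<beta> z0 z1"
proof -
  have interval: "P - {z0, z1} = open_interval z0 z1"
    using bounds unfolding open_interval_def lt_on_def by auto
  have "inj_on rk C" if "C \<in> chains_between z0 z1" for C
    using that open_interval_subset unfolding chains_between_def by (blast intro: inj_on_rk_chain)
  then have flag: "flag_f P le z0 z1 rk S = card {C \<in> chains_between z0 z1. rk ` C = S}" for S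
    unfolding flag_f_def interval by (intro arg_cong[where f = card]) (auto simp: chains_between_def bij_betw_def)
  have "(\<lambda>C. rk ` C) ` chains_between z0 z1 \<subseteq> Pow {1..n}"
    using rk_chains_between[OF _ z0 z1] rk_z0 rk_z1 by fastforce
  then have "chain_sum \<alpha> \<beta> z0 z1
      = (\<Sum>S\<in>Pow {1..n}. \<Sum>C\<in>{C \<in> chains_between z0 z1. rk ` C = S}. rank_weight \<alpha> \<beta> 0 (Suc n) (rk ` C))"
    unfolding chain_sum_def rk_z0 rk_z1 by (intro sum.group[symmetric] finite_chains_between) auto
  also have "\<dots> = (\<Sum>S\<in>Pow {1..n}. of_nat (flag_f P le z0 z1 rk S) * rank_weight \<alpha> \<beta> 0 (Suc n) S)"
    unfolding flag by (intro sum.cong refl) simp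
  finally show ?thesis ..
qed

end

locale eulerian_poset = ranked_poset +
  assumes euler: "\<lbrakk>u \<in> P; v \<in> P; lt_on le u v\<rbrakk> \<Longrightarrow>
    card {z \<in> P. le u z \<and> le z v \<and> even (rk z - rk u)} = card {z \<in> P. le u z \<and> le z v \<and> odd (rk z - rk u)}"
begin

lemma card_odd_open_interval:
  assumes u: "u \<in> P" and v: "v \<in> P" and uv: "lt_on le u v" and ev: "even (rk v - rk u)"
  shows "card {z \<in> open_interval u v. odd (rk z - rk u)} = card {z \<in> open_interval u v. even (rk z - rk u)} + 2"
proof -
  have "{z \<in> P. le u z \<and> le z v \<and> even (rk z - rk u)} = insert u (insert v {z \<in> open_interval u v. even (rk z - rk u)})"
    using u v uv ev refl_le unfolding open_interval_def lt_on_def by auto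
  moreover have "{z \<in> P. le u z \<and> le z v \<and> odd (rk z - rk u)} = {z \<in> open_interval u v. odd (rk z - rk u)}"
    using ev unfolding open_interval_def lt_on_def by auto
  moreover have "u \<noteq> v" "u \<notin> open_interval u v" "v \<notin> open_interval u v"
    using uv unfolding open_interval_def lt_on_def by auto
  ultimately show ?thesis
    using euler[OF u v uv] finite_open_interval by simp
qed

text \<open>The value of the \<open>ab\<close>-index of \<open>[u, v]\<close> at \<open>a = 1\<close>, \<open>b = -1\<close>. In terms of the
  \<open>cd\<close>-index this is \<open>c = 0\<close>, \<open>d = -2\<close>, which explains why it vanishes on intervals of even length.\<close>

definition signed_chain_count :: "'a \<Rightarrow> 'a \<Rightarrow> int"
  where "signed_chain_count = chain_sum (\<lambda>_. -1) (\<lambda>_. 2)"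

lemma signed_chain_count_first:
  "\<lbrakk>u \<in> P; v \<in> P\<rbrakk> \<Longrightarrow> signed_chain_count u v
    = 2 ^ (rk v - Suc (rk u)) - (\<Sum>z\<in>open_interval u v. 2 ^ (rk z - Suc (rk u)) * signed_chain_count z v)"
  unfolding signed_chain_count_def
  by (subst chain_sum_first) (simp_all add: conv_def prod_constant sum_negf)

lemma signed_chain_count_last:
  "\<lbrakk>u \<in> P; v \<in> P\<rbrakk> \<Longrightarrow> signed_chain_count u v
    = 2 ^ (rk v - Suc (rk u)) - (\<Sum>z\<in>open_interval u v. signed_chain_count u z * 2 ^ (rk v - Suc (rk z)))"
  unfolding signed_chain_count_def
  by (subst chain_sum_last) (simp_all add: conv_def prod_constant sum_negf)

text \<open>The assumption \<open>shorter_even_vanish\<close> is the induction hypothesis of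
  \<open>signed_chain_count_eq_0\<close>.\<close>

context
  fixes u v :: 'a
  assumes u: "u \<in> P" and v: "v \<in> P"
    and shorter_even_vanish: "\<And>x y. \<lbrakk>x \<in> P; y \<in> P; lt_on le x y; even (rk y - rk x);
      rk u \<le> rk x; rk y \<le> rk v; rk u < rk x \<or> rk y < rk v\<rbrakk> \<Longrightarrow> signed_chain_count x y = 0"
begin

private lemma in_open_interval:
  "y \<in> open_interval u v \<Longrightarrow> y \<in> P \<and> lt_on le u y \<and> lt_on le y v \<and> rk u < rk y \<and> rk y < rk v"
  using rk_open_interval[OF _ u v] unfolding open_interval_def by blast

private lemma signed_chain_count_last_odd:
  "signed_chain_count u v = 2 ^ (rk v - Suc (rk u))
    - (\<Sum>y\<in>{y \<in> open_interval u v. odd (rk y - rk u)}. signed_chain_count u y * 2 ^ (rk v - Suc (rk y)))"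
proof -
  have "(\<Sum>y\<in>open_interval u v. signed_chain_count u y * 2 ^ (rk v - Suc (rk y)))
      = (\<Sum>y\<in>{y \<in> open_interval u v. odd (rk y - rk u)}. signed_chain_count u y * 2 ^ (rk v - Suc (rk y)))"
    using in_open_interval shorter_even_vanish[OF u]
    by (intro sum.mono_neutral_right finite_open_interval) auto
  then show ?thesis
    using signed_chain_count_last[OF u v] by simp
qed

private lemma signed_chain_count_first_even:
  assumes y: "y \<in> open_interval u v" and y_odd: "odd (rk y - rk u)"
  shows "signed_chain_count u y = 2 ^ (rk y - Suc (rk u))
    - (\<Sum>z\<in>{z \<in> open_interval u v. even (rk z - rk u) \<and> lt_on le z y}. 2 ^ (rk z - Suc (rk u)) * signed_chain_count z y)"
proof -
  have "(\<Sum>z\<in>open_interval u y. 2 ^ (rk z - Suc (rk u)) * signed_chain_count z y)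
      = (\<Sum>z\<in>{z \<in> open_interval u v. even (rk z - rk u) \<and> lt_on le z y}. 2 ^ (rk z - Suc (rk u)) * signed_chain_count z y)"
    unfolding open_interval_left[OF u v y]
  proof (intro sum.mono_neutral_right ballI)
    fix z assume z: "z \<in> {z \<in> open_interval u v. lt_on le z y} - {z \<in> open_interval u v. even (rk z - rk u) \<and> lt_on le z y}"
    then have "z \<in> open_interval u v" "lt_on le z y" "odd (rk z - rk u)"
      by auto
    with y y_odd show "2 ^ (rk z - Suc (rk u)) * signed_chain_count z y = 0"
      using in_open_interval[OF y] in_open_interval[of z] rk_strict_mono[of z y]
      by (subst shorter_even_vanish) auto
  qed (auto simp: finite_open_interval)
  then show ?thesis
    using signed_chain_count_first[OF u] in_open_interval[OF y] by simp
qed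

private lemma sum_signed_chain_count_odd:
  assumes z: "z \<in> open_interval u v" and z_even: "even (rk z - rk u)" and uv_even: "even (rk v - rk u)"
  shows "(\<Sum>y\<in>{y \<in> open_interval u v. odd (rk y - rk u) \<and> lt_on le z y}. signed_chain_count z y * 2 ^ (rk v - Suc (rk y)))
    = 2 ^ (rk v - Suc (rk z))"
proof -
  have "(\<Sum>y\<in>open_interval z v. signed_chain_count z y * 2 ^ (rk v - Suc (rk y)))
      = (\<Sum>y\<in>{y \<in> open_interval u v. odd (rk y - rk u) \<and> lt_on le z y}. signed_chain_count z y * 2 ^ (rk v - Suc (rk y)))"
    unfolding open_interval_right[OF u v z]
  proof (intro sum.mono_neutral_right ballI)
    fix y assume y: "y \<in> {y \<in> open_interval u v. lt_on le z y} - {y \<in> open_interval u v. odd (rk y - rk u) \<and> lt_on le z y}"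
    then have "y \<in> open_interval u v" "lt_on le z y" "even (rk y - rk u)"
      by auto
    with z z_even show "signed_chain_count z y * 2 ^ (rk v - Suc (rk y)) = 0"
      using in_open_interval[OF z] in_open_interval[of y] rk_strict_mono[of z y]
      by (subst shorter_even_vanish) auto
  qed (auto simp: finite_open_interval)
  moreover have "signed_chain_count z v = 0"
    using in_open_interval[OF z] z_even uv_even v by (intro shorter_even_vanish) auto
  ultimately show ?thesis
    using signed_chain_count_last[OF _ v, of z] in_open_interval[OF z] by simp
qed

text \<open>Expanding at the top and then at the bottom of the interval, the surviving terms pair up an
  even-rank element with an odd-rank element above it, and each pair contributes the same power of 2.\<close>

lemma signed_chain_count_eq_card_diff:
  assumes uv: "lt_on le u v" and uv_even: "even (rk v - rk u)"
  defines "Yo \<equiv> {y \<in> open_interval u v. odd (rk y - rk u)}"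
    and "Ye \<equiv> {y \<in> open_interval u v. even (rk y - rk u)}"
  shows "signed_chain_count u v = (2 + int (card Ye) - int (card Yo)) * 2 ^ (rk v - rk u - 2)"
proof -
  let ?R = signed_chain_count
  define G where "G z y = 2 ^ (rk z - Suc (rk u)) * ?R z y * 2 ^ (rk v - Suc (rk y))" for z y
  have ab: "rk u < rk v" "rk v - rk u - 1 = Suc (rk v - rk u - 2)"
    using rk_strict_mono[OF u v uv] uv_even by presburger+
  have pow: "(2::int) ^ (c - Suc (rk u)) * 2 ^ (rk v - Suc c) = 2 ^ (rk v - rk u - 2)"
    if "rk u < c" "c < rk v" for c
    using that by (simp flip: power_add)
  have first: "?R u y * 2 ^ (rk v - Suc (rk y)) = 2 ^ (rk v - rk u - 2) - (\<Sum>z\<in>{z \<in> Ye. lt_on le z y}. G z y)"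
    if y: "y \<in> Yo" for y
  proof -
    have "{z \<in> Ye. lt_on le z y} = {z \<in> open_interval u v. even (rk z - rk u) \<and> lt_on le z y}"
      unfolding Ye_def by blast
    then show ?thesis
      using y signed_chain_count_first_even[of y] pow[of "rk y"] in_open_interval[of y]
      unfolding Yo_def G_def by (simp add: left_diff_distrib sum_distrib_right)
  qed
  have inner: "(\<Sum>y\<in>{y \<in> Yo. lt_on le z y}. G z y) = 2 ^ (rk v - rk u - 2)" if z: "z \<in> Ye" for z
  proof -
    have "{y \<in> Yo. lt_on le z y} = {y \<in> open_interval u v. odd (rk y - rk u) \<and> lt_on le z y}"
      unfolding Yo_def by blast
    then show ?thesis
      using z sum_signed_chain_count_odd[OF _ _ uv_even, of z] pow[of "rk z"] in_open_interval[of z]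
      unfolding Ye_def G_def mult.assoc sum_distrib_left[symmetric] by simp
  qed
  have swap: "(\<Sum>y\<in>Yo. \<Sum>z\<in>{z \<in> Ye. lt_on le z y}. G z y) = (\<Sum>z\<in>Ye. \<Sum>y\<in>{y \<in> Yo. lt_on le z y}. G z y)"
    by (rule sum.swap_restrict) (simp_all add: Yo_def Ye_def finite_open_interval)
  have "?R u v = 2 ^ (rk v - rk u - 1) - (\<Sum>y\<in>Yo. 2 ^ (rk v - rk u - 2) - (\<Sum>z\<in>{z \<in> Ye. lt_on le z y}. G z y))"
    using signed_chain_count_last_odd first unfolding Yo_def by simp
  also have "\<dots> = 2 * 2 ^ (rk v - rk u - 2) - int (card Yo) * 2 ^ (rk v - rk u - 2) + int (card Ye) * 2 ^ (rk v - rk u - 2)"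
    using swap inner ab(2) by (simp add: sum_subtractf)
  finally show ?thesis
    by (simp add: algebra_simps)
qed

end

lemma signed_chain_count_eq_0:
  "\<lbrakk>u \<in> P; v \<in> P; lt_on le u v; even (rk v - rk u)\<rbrakk> \<Longrightarrow> signed_chain_count u v = 0"
proof (induction "rk v - rk u" arbitrary: u v rule: less_induct)
  case less
  have "signed_chain_count x y = 0" if "x \<in> P" "y \<in> P" "lt_on le x y" "even (rk y - rk x)"
    "rk u \<le> rk x" "rk y \<le> rk v" "rk u < rk x \<or> rk y < rk v" for x y
    using less.hyps[of y x] that rk_strict_mono[OF that(1-3)] by fastforce
  then show ?case
    using signed_chain_count_eq_card_diff[of u v] card_odd_open_interval[of u v] less.prems by simp
qed

lemma one_plus_X_power_dvd_chain_sum_signed: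
  assumes u: "u \<in> P" and v: "v \<in> P" and uv: "lt_on le u v"
  shows "[:1, 1:] ^ card {i \<in> {rk u<..<rk v}. odd i}
    dvd (chain_sum (\<lambda>i. - (1 - [:0, 1:] ^ i)) (\<lambda>i. 2 * (1 - [:0, 1:] ^ i)) u v :: int poly)"
proof -
  have "(chain_sum (\<lambda>i. - (1 - [:0, 1:] ^ i)) (\<lambda>i. 2 * (1 - [:0, 1:] ^ i)) u v :: int poly)
      = chain_sum (\<lambda>i. (1 - [:0, 1:] ^ i) * of_int (-1)) (\<lambda>i. (1 - [:0, 1:] ^ i) * of_int 2) u v"
    by (rule arg_cong2[where f = "\<lambda>\<alpha> \<beta>. chain_sum \<alpha> \<beta> u v"]) (simp_all add: fun_eq_iff)
  also have "\<dots> = (\<Prod>i\<in>{rk u<..<rk v}. 1 - [:0, 1:] ^ i) * chain_sum (\<lambda>_. of_int (-1)) (\<lambda>_. of_int 2) u v"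
    by (rule chain_sum_scale)
  also have "chain_sum (\<lambda>_. of_int (-1)) (\<lambda>_. of_int 2) u v = (of_int (signed_chain_count u v) :: int poly)"
    unfolding signed_chain_count_def by (rule chain_sum_of_int)
  finally have "(chain_sum (\<lambda>i. - (1 - [:0, 1:] ^ i)) (\<lambda>i. 2 * (1 - [:0, 1:] ^ i)) u v :: int poly)
      = (\<Prod>i\<in>{rk u<..<rk v}. 1 - [:0, 1:] ^ i) * of_int (signed_chain_count u v)" .
  moreover have "[:1, 1:] ^ card {i \<in> {rk u<..<rk v}. odd i} dvd (\<Prod>i\<in>{rk u<..<rk v}. 1 - [:0, 1:] ^ i :: int poly)"
    if "odd (rk v - rk u)"
    using one_plus_X_power_dvd_prod_one_minus_X_power[of "{rk u<..<rk v}"]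
    unfolding card_even_eq_card_odd_between[OF that] by simp
  ultimately show ?thesis
    using signed_chain_count_eq_0[OF u v uv] by (cases "even (rk v - rk u)") auto
qed

lemma one_plus_X_power_dvd_chain_sum_macmahon:
  "\<lbrakk>u \<in> P; v \<in> P; lt_on le u v\<rbrakk> \<Longrightarrow> [:1, 1:] ^ card {i \<in> {rk u<..<rk v}. odd i}
    dvd (chain_sum (\<lambda>i. 2 * [:0, 1:] ^ i) (\<lambda>i. 2 * (1 - [:0, 1:] ^ i)) u v :: int poly)"
proof (induction "rk v - rk u" arbitrary: u rule: less_induct)
  case less
  note u = less.prems(1) and v = less.prems(2) and uv = less.prems(3)
  let ?Y = "chain_sum (\<lambda>i. 2 * [:0, 1:] ^ i) (\<lambda>i. 2 * (1 - [:0, 1:] ^ i)) :: 'a \<Rightarrow> 'a \<Rightarrow> int poly"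
  let ?E = "chain_sum (\<lambda>i. - (1 - [:0, 1:] ^ i)) (\<lambda>i. 2 * (1 - [:0, 1:] ^ i)) :: 'a \<Rightarrow> 'a \<Rightarrow> int poly"
  let ?k = "\<lambda>x y. card {i \<in> {rk x<..<rk y}. odd i}"
  have "?Y u v = ?E u v + conv (\<lambda>z. 2 * [:0, 1:] ^ rk z - - (1 - [:0, 1:] ^ rk z)) ?E ?Y u v"
    by (rule conv_solution_split[OF chain_sum_first chain_sum_first u v])
  also have "(\<lambda>z. 2 * [:0, 1:] ^ rk z - - (1 - [:0, 1:] ^ rk z)) = (\<lambda>z. 1 + [:0, 1:] ^ rk z :: int poly)"
    by (simp add: algebra_simps)
  finally have Y: "?Y u v = ?E u v + conv (\<lambda>z. 1 + [:0, 1:] ^ rk z) ?E ?Y u v" .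
  have "[:1, 1:] ^ ?k u v dvd ?E u z * (1 + [:0, 1:] ^ rk z) * ?Y z v" if z: "z \<in> open_interval u v" for z
  proof -
    have z': "z \<in> P" "lt_on le u z" "lt_on le z v" "rk u < rk z" "rk z < rk v"
      using z rk_open_interval[OF z u v] unfolding open_interval_def by auto
    have "[:1, 1:] ^ ?k u z dvd ?E u z"
      using one_plus_X_power_dvd_chain_sum_signed[OF u z'(1,2)] .
    moreover have "[:1, 1:] ^ of_bool (odd (rk z)) dvd (1 + [:0, 1:] ^ rk z :: int poly)"
      using one_plus_X_dvd_one_plus_X_power by auto
    moreover have "[:1, 1:] ^ ?k z v dvd ?Y z v"
      using less.hyps[of z] z' v by simp
    ultimately have "[:1, 1:] ^ ?k u z * [:1, 1:] ^ of_bool (odd (rk z)) * [:1, 1:] ^ ?k z v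
        dvd ?E u z * (1 + [:0, 1:] ^ rk z) * ?Y z v"
      by (intro mult_dvd_mono)
    then show ?thesis
      unfolding card_odd_between_split[OF z'(4,5)] power_add .
  qed
  then show ?case
    unfolding Y conv_def using one_plus_X_power_dvd_chain_sum_signed[OF u v uv] by (simp add: dvd_sum)
qed

end

lemma graded_poset_rk_strict_mono:
  assumes "graded_poset P le z0 z1 rk"
  shows "\<lbrakk>x \<in> P; y \<in> P; lt_on le x y\<rbrakk> \<Longrightarrow> rk x < rk y"
proof (induction "card {w \<in> P. le x w \<and> le w y}" arbitrary: x y rule: less_induct)
  case less
  have finite: "finite P" and refl: "\<And>x. x \<in> P \<Longrightarrow> le x x"
    and antisym: "\<And>x y. \<lbrakk>x \<in> P; y \<in> P; le x y; le y x\<rbrakk> \<Longrightarrow> x = y"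
    and trans: "\<And>x y z. \<lbrakk>x \<in> P; y \<in> P; z \<in> P; le x y; le y z\<rbrakk> \<Longrightarrow> le x z"
    and covers: "\<And>x y. covers_on P le x y \<Longrightarrow> rk y = rk x + 1"
    using assms unfolding graded_poset_def by blast+
  show ?case
  proof (cases "covers_on P le x y")
    case True
    then show ?thesis using covers by simp
  next
    case False
    then obtain w where w: "w \<in> P" "lt_on le x w" "lt_on le w y"
      using less.prems unfolding covers_on_def by blast
    let ?I = "\<lambda>a b. {v \<in> P. le a v \<and> le v b}"
    have "?I x w \<subset> ?I x y"
    proof
      show "?I x w \<subseteq> ?I x y"
        using w less.prems trans unfolding lt_on_def by blast
      have "y \<in> ?I x y" "y \<notin> ?I x w"
        using w less.prems refl antisym unfolding lt_on_def by blast+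
      then show "?I x w \<noteq> ?I x y"
        by blast
    qed
    moreover have "?I w y \<subset> ?I x y"
    proof
      show "?I w y \<subseteq> ?I x y"
        using w less.prems trans unfolding lt_on_def by blast
      have "x \<in> ?I x y" "x \<notin> ?I w y"
        using w less.prems refl antisym unfolding lt_on_def by blast+
      then show "?I w y \<noteq> ?I x y"
        by blast
    qed
    ultimately have "card (?I x w) < card (?I x y)" "card (?I w y) < card (?I x y)"
      using finite by (simp_all add: psubset_card_mono)
    then have "rk x < rk w" "rk w < rk y"
      using less.hyps w less.prems by blast+
    then show ?thesis by simp
  qed
qed

lemma eulerian_imp_eulerian_poset:
  assumes "eulerian P le z0 z1 rk"
  shows "eulerian_poset P le rk"
proof -
  have graded: "graded_poset P le z0 z1 rk"
    using assms unfolding eulerian_def by blast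
  show ?thesis
  proof (unfold_locales)
    show "finite P"
      using graded unfolding graded_poset_def by blast
    show "le x x" if "x \<in> P" for x
      using graded that unfolding graded_poset_def by blast
    show "x = y" if "x \<in> P" "y \<in> P" "le x y" "le y x" for x y
      using graded that unfolding graded_poset_def by blast
    show "le x z" if "x \<in> P" "y \<in> P" "z \<in> P" "le x y" "le y z" for x y z
      using graded that unfolding graded_poset_def by blast
    show "rk x < rk y" if "x \<in> P" "y \<in> P" "lt_on le x y" for x y
      using graded that by (rule graded_poset_rk_strict_mono)
    show "card {z \<in> P. le u z \<and> le z v \<and> even (rk z - rk u)} = card {z \<in> P. le u z \<and> le z v \<and> odd (rk z - rk u)}"
      if "u \<in> P" "v \<in> P" "lt_on le u v" for u v
      using assms that unfolding eulerian_def by blast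
  qed
qed

theorem mainTheorem5:
  fixes P :: "'a set" and le :: "'a \<Rightarrow> 'a \<Rightarrow> bool" and z0 z1 :: 'a
    and rk :: "'a \<Rightarrow> nat" and n :: nat
  assumes "eulerian P le z0 z1 rk"
    and "rk z1 = n + 1"
  shows "([:1, 1:] :: int poly) ^ nat \<lceil>real n / 2\<rceil> dvd Theta (ab_index P le z0 z1 rk n)"
proof -
  interpret eulerian_poset P le rk
    using assms(1) by (rule eulerian_imp_eulerian_poset)
  have z: "z0 \<in> P" "z1 \<in> P" "\<forall>x\<in>P. le z0 x \<and> le x z1" "rk z0 = 0" "rk z1 = Suc n"
    using assms unfolding eulerian_def graded_poset_def by auto
  then have "lt_on le z0 z1"
    unfolding lt_on_def by auto
  then have "[:1, 1:] ^ card {i \<in> {0<..<Suc n}. odd i}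
      dvd (chain_sum (\<lambda>i. 2 * [:0, 1:] ^ i) (\<lambda>i. 2 * (1 - [:0, 1:] ^ i)) z0 z1 :: int poly)"
    by (rule one_plus_X_power_dvd_chain_sum_macmahon[OF z(1,2), unfolded z(4,5)])
  also have "chain_sum (\<lambda>i. 2 * [:0, 1:] ^ i) (\<lambda>i. 2 * (1 - [:0, 1:] ^ i)) z0 z1
      = (\<Prod>i\<in>{rk z0<..<rk z1}. 2) * chain_sum (\<lambda>i. [:0, 1:] ^ i) (\<lambda>i. 1 - [:0, 1:] ^ i) z0 z1"
    by (rule chain_sum_scale)
  also have "\<dots> = 2 ^ n * Theta (ab_index P le z0 z1 rk n)"
    by (simp only: Theta_ab_index sum_flag_f_eq_chain_sum[OF z]) (simp add: z(4,5))
  finally have "[:1, 1:] ^ ((n + 1) div 2) dvd 2 ^ n * Theta (ab_index P le z0 z1 rk n)"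
    by (simp only: card_odd_below)
  moreover have "poly (2 ^ n :: int poly) (-1) \<noteq> 0"
    by simp
  ultimately have "[:1, 1:] ^ ((n + 1) div 2) dvd Theta (ab_index P le z0 z1 rk n)"
    using linear_factor_power_dvd_cancel[of _ "-1", unfolded minus_minus] by blast
  then show ?thesis
    by (simp only: nat_ceiling_half)
qed

end
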